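(* Let Assumptions (G) and (W) hold and let $\tilde{\boldsymbol A}$ be nonnegative definite. Then $\alpha^N=(\alpha^{1,N},\dots,\alpha^{N,N})\in\mathcal A^N$ is a Nash equilibrium of the $N$-player game on the weighted graph $w^N$ (objectives $J_0^{i,N}$) if and only if the step function strategy profile $\alpha^N_{\mathrm{step}}$ is a graphon game Nash equilibrium of the graphon game with underlying step graphon $W^N$ (corresponding to $w^N$) and with noise family $b^N_{\mathrm{step}}$ (corresponding to $(b^{1,N},\dots,b^{N,N})$) in place of $b$.
   Context: Finite-player setting. $T>0$; $\langle\cdot,\cdot\rangle_{L^2}$ inner product on $L^2([0,T])$; kernels $G$ induce $(\boldsymbol Gf)(t)=\int_0^TG(t,s)f(s)ds$, adjoints via $G(s,t)$; $\mathcal G$: real Volterra kernels ($G(t,s)=0$ for $s\ge t$) in $L^2([0,T]^2)$; nonnegative definite: $\langle f,\boldsymbol Gf\rangle\ge0$. $\mathcal A$: $\mathbb F$-progressively measurable processes with $\int_0^T\mathbb E[\alpha_t^2]dt<\infty$. Assumption (G): $\tilde A,\tilde B,\tilde C\in\mathcal G$; $\lambda>0$; $b^{i,N},b^{*,N}$ progressively measurable in $L^2(\Omega\times[0,T])$; $c^{i,N}$ integrable $\mathcal F_T$-measurable; $w^N\in[0,1]^{N\times N}$ symmetric with zero diagonal. With $\bar\alpha^{i,N}=\frac1N\sum_jw^N_{ij}\alpha^{j,N}$: $J_0^{i,N}=\mathbb E[-\langle\alpha^{i,N},(\tilde{\boldsymbol A}+\lambda\boldsymbol I)\alpha^{i,N}\rangle_{L^2}-\langle\alpha^{i,N},(\tilde{\boldsymbol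 B}+\tilde{\boldsymbol B}^* )\bar\alpha^{i,N}\rangle_{L^2}-\langle\bar\alpha^{i,N},\tilde{\boldsymbol C}\bar\alpha^{i,N}\rangle_{L^2}+\langle b^{i,N},\alpha^{i,N}\rangle_{L^2}+\langle b^{*,N},\bar\alpha^{i,N}\rangle_{L^2}+c^{i,N}]$; Nash equilibrium: no player gains by unilateral deviation in $\mathcal A$. Graphon setting: rich Fubini extension $([0,1]\times\Omega,\mathcal I\boxtimes\mathcal F,\mu\boxtimes\mathbb P)$ over $([0,1],\mathcal I,\mu)$ extending Lebesgue measure; graphon $W$: symmetric Borel $[0,1]^2\to[0,1]$ with $(\boldsymbol Wf)(u)=\int W(u,v)f(v)dv$. Assumption (W): $\tilde A,\tilde B,\tilde C\in\mathcal G$ with $\sup_t\int_0^T(|\tilde A(t,s)|^2+|\tilde B(t,s)|^2)ds+\sup_s\int_0^T(|\tilde A(t,s)|^2+|\tilde B(t,s)|^2)dt<\infty$; $(b^u,c^u)_u$ jointly $\mathcal I\boxtimes\mathcal F$-measurable, essentially pairwise independent, with measurable law map, $b^u$ progressively measurable, $b\in L^2(\Omega\times[0,T]\times[0,1])$, $c^u$ integrable; $b^*$ independent common noise in $L^2(\Omega\times[0,T])$; $\lambda>0$. $\mathbb F$: augmented filtration generated by $((b^u),(c^u),b^* )$; it is assumed to contain the filtration generated by $(b^{1,N},\dots,b^{N,N},b^{*,N},c^{1,N},\dots,c^{N,N})$. Admissible profiles $\mathcal A^\infty$: jointly measurable $\mathbb F$-progressively measurable families with $\int_0^T\mathbb E[(\alpha^u_t)^2]dt<\infty$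 a.e. and $\int_0^1\int_0^T\mathbb E[(\alpha^u_t)^2]dtdu<\infty$. $J^{u,W}(\alpha^u;(\alpha^v)_{v\ne u})=\mathbb E[-\langle\alpha^u,(\tilde{\boldsymbol A}+\lambda\boldsymbol I)\alpha^u\rangle-\langle\alpha^u,(\tilde{\boldsymbol B}+\tilde{\boldsymbol B}^* )(\boldsymbol W\alpha)(u)\rangle-\langle(\boldsymbol W\alpha)(u),\tilde{\boldsymbol C}(\boldsymbol W\alpha)(u)\rangle+\langle b^u,\alpha^u\rangle+\langle b^*,(\boldsymbol W\alpha)(u)\rangle+c^u]$ with $(\boldsymbol W\alpha)(u)_t=\int_0^1W(u,v)\alpha^v_tdv$; graphon Nash equilibrium: $\hat\alpha\in\mathcal A^\infty$ with $\hat\alpha^u$ maximizing $J^{u,W}(\cdot;(\hat\alpha^v)_{v\ne u})$ over progressively measurable $L^2$ processes for $\mu$-a.e. $u$. (In the step-graphon game, $b^*$ is taken to be $b^{*,N}$ and $c^u$ any integrable family.) Steps: $\mathcal P^N_i=[\frac{i-1}N,\frac iN)$ for $i<N$, $\mathcal P^N_N=[\frac{N-1}N,1]$. For processes $\alpha^{1,N},\dots,\alpha^{N,N}$, $\alpha^{u,N}_{\mathrm{step}}:=\alpha^{i,N}$ for $u\in\mathcal P^N_i$ (similarly $b^N_{\mathrm{step}}$). $W^N(u,v):=w^N_{ij}$ for $(u,v)\in\mathcal P^N_i\times\mathcal P^N_j$. *)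

theory Defs
  imports "HOL-Probability.Probability"
begin

definition ip :: "real \<Rightarrow> (real \<Rightarrow> real) \<Rightarrow> (real \<Rightarrow> real) \<Rightarrow> real" where
  "ip T f g = (LINT s:{0..T}|lborel. f s * g s)"

definition kop :: "real \<Rightarrow> (real \<Rightarrow> real \<Rightarrow> real) \<Rightarrow> (real \<Rightarrow> real) \<Rightarrow> real \<Rightarrow> real" where
  "kop T G f = (\<lambda>t. LINT s:{0..T}|lborel. G t s * f s)"

definition kadj :: "(real \<Rightarrow> real \<Rightarrow> real) \<Rightarrow> real \<Rightarrow> real \<Rightarrow> real" where
  "kadj G = (\<lambda>t s. G s t)"

definition L2fun :: "real \<Rightarrow> (real \<Rightarrow> real) \<Rightarrow> bool" where
  "L2fun T f \<longleftrightarrow> f \<in> borel_measurable lborel \<and> set_integrable lborel {0..T} (\<lambda>s. (f s)\<^sup>2)"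

definition volterra :: "real \<Rightarrow> (real \<Rightarrow> real \<Rightarrow> real) \<Rightarrow> bool" where
  "volterra T G \<longleftrightarrow> case_prod G \<in> borel_measurable borel
     \<and> (\<forall>t\<in>{0..T}. \<forall>s\<in>{0..T}. t \<le> s \<longrightarrow> G t s = 0)
     \<and> (\<integral>\<^sup>+ x \<in> {0..T} \<times> {0..T}. ennreal ((case_prod G x)\<^sup>2) \<partial>lborel) < \<infinity>"

definition nonneg_def_kernel :: "real \<Rightarrow> (real \<Rightarrow> real \<Rightarrow> real) \<Rightarrow> bool" where
  "nonneg_def_kernel T G \<longleftrightarrow> (\<forall>f. L2fun T f \<longrightarrow> ip T f (kop T G f) \<ge> 0)"

definition progressive ::
  "real \<Rightarrow> (real \<Rightarrow> 'w measure) \<Rightarrow> ('w \<Rightarrow> real \<Rightarrow> real) \<Rightarrow> bool" where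
  "progressive T F X \<longleftrightarrow>
     (\<forall>t\<in>{0..T}. (\<lambda>(\<omega>, s). X \<omega> s) \<in> borel_measurable (F t \<Otimes>\<^sub>M restrict_space lborel {0..t}))"

definition L2proc :: "real \<Rightarrow> 'w measure \<Rightarrow> ('w \<Rightarrow> real \<Rightarrow> real) \<Rightarrow> bool" where
  "L2proc T M X \<longleftrightarrow> (\<integral>\<^sup>+ t \<in> {0..T}. (\<integral>\<^sup>+ \<omega>. ennreal ((X \<omega> t)\<^sup>2) \<partial>M) \<partial>lborel) < \<infinity>"

definition admissible ::
  "real \<Rightarrow> 'w measure \<Rightarrow> (real \<Rightarrow> 'w measure) \<Rightarrow> ('w \<Rightarrow> real \<Rightarrow> real) \<Rightarrow> bool" where
  "admissible T M F X \<longleftrightarrow> progressive T F X \<and> L2proc T M X"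

definition abar :: "nat \<Rightarrow> (nat \<Rightarrow> nat \<Rightarrow> real) \<Rightarrow> (nat \<Rightarrow> 'w \<Rightarrow> real \<Rightarrow> real) \<Rightarrow> nat \<Rightarrow> 'w \<Rightarrow> real \<Rightarrow> real" where
  "abar N w \<alpha> i = (\<lambda>\<omega> t. (1 / real N) * (\<Sum>j\<in>{1..N}. w i j * \<alpha> j \<omega> t))"

definition payoff ::
  "real \<Rightarrow> (real \<Rightarrow> real \<Rightarrow> real) \<Rightarrow> (real \<Rightarrow> real \<Rightarrow> real) \<Rightarrow> (real \<Rightarrow> real \<Rightarrow> real) \<Rightarrow> real
   \<Rightarrow> (real \<Rightarrow> real) \<Rightarrow> (real \<Rightarrow> real) \<Rightarrow> (real \<Rightarrow> real) \<Rightarrow> (real \<Rightarrow> real) \<Rightarrow> real \<Rightarrow> real" where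
  "payoff T A B C lam a z b bs c =
     - ip T a (\<lambda>t. kop T A a t + lam * a t)
     - ip T a (\<lambda>t. kop T B z t + kop T (kadj B) z t)
     - ip T z (kop T C z)
     + ip T b a + ip T bs z + c"

definition J0 ::
  "real \<Rightarrow> 'w measure \<Rightarrow> (real \<Rightarrow> real \<Rightarrow> real) \<Rightarrow> (real \<Rightarrow> real \<Rightarrow> real) \<Rightarrow> (real \<Rightarrow> real \<Rightarrow> real) \<Rightarrow> real
   \<Rightarrow> nat \<Rightarrow> (nat \<Rightarrow> nat \<Rightarrow> real) \<Rightarrow> (nat \<Rightarrow> 'w \<Rightarrow> real \<Rightarrow> real) \<Rightarrow> ('w \<Rightarrow> real \<Rightarrow> real)
   \<Rightarrow> (nat \<Rightarrow> 'w \<Rightarrow> real) \<Rightarrow> nat \<Rightarrow> (nat \<Rightarrow> 'w \<Rightarrow> real \<Rightarrow> real) \<Rightarrow> real" where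
  "J0 T M A B C lam N w b bs c i \<alpha> =
     (\<integral>\<omega>. payoff T A B C lam (\<alpha> i \<omega>) (abar N w \<alpha> i \<omega>) (b i \<omega>) (bs \<omega>) (c i \<omega>) \<partial>M)"

definition nash_N ::
  "real \<Rightarrow> 'w measure \<Rightarrow> (real \<Rightarrow> 'w measure) \<Rightarrow> (real \<Rightarrow> real \<Rightarrow> real) \<Rightarrow> (real \<Rightarrow> real \<Rightarrow> real)
   \<Rightarrow> (real \<Rightarrow> real \<Rightarrow> real) \<Rightarrow> real \<Rightarrow> nat \<Rightarrow> (nat \<Rightarrow> nat \<Rightarrow> real) \<Rightarrow> (nat \<Rightarrow> 'w \<Rightarrow> real \<Rightarrow> real)
   \<Rightarrow> ('w \<Rightarrow> real \<Rightarrow> real) \<Rightarrow> (nat \<Rightarrow> 'w \<Rightarrow> real) \<Rightarrow> (nat \<Rightarrow> 'w \<Rightarrow> real \<Rightarrow> real) \<Rightarrow> bool" where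
  "nash_N T M F A B C lam N w b bs c \<alpha> \<longleftrightarrow>
     (\<forall>i\<in>{1..N}. admissible T M F (\<alpha> i)) \<and>
     (\<forall>i\<in>{1..N}. \<forall>\<beta>. admissible T M F \<beta> \<longrightarrow>
        J0 T M A B C lam N w b bs c i (\<alpha>(i := \<beta>)) \<le> J0 T M A B C lam N w b bs c i \<alpha>)"

definition Wagg :: "(real \<Rightarrow> real \<Rightarrow> real) \<Rightarrow> (real \<Rightarrow> 'w \<Rightarrow> real \<Rightarrow> real) \<Rightarrow> real \<Rightarrow> 'w \<Rightarrow> real \<Rightarrow> real" where
  "Wagg W \<alpha> u = (\<lambda>\<omega> t. LINT v:{0..1}|lborel. W u v * \<alpha> v \<omega> t)"

definition JW ::
  "real \<Rightarrow> 'w measure \<Rightarrow> (real \<Rightarrow> real \<Rightarrow> real) \<Rightarrow> (real \<Rightarrow> real \<Rightarrow> real) \<Rightarrow> (real \<Rightarrow> real \<Rightarrow> real) \<Rightarrow> real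
   \<Rightarrow> (real \<Rightarrow> real \<Rightarrow> real) \<Rightarrow> (real \<Rightarrow> 'w \<Rightarrow> real \<Rightarrow> real) \<Rightarrow> ('w \<Rightarrow> real \<Rightarrow> real)
   \<Rightarrow> (real \<Rightarrow> 'w \<Rightarrow> real) \<Rightarrow> real \<Rightarrow> (real \<Rightarrow> 'w \<Rightarrow> real \<Rightarrow> real) \<Rightarrow> real" where
  "JW T M A B C lam W b bs c u \<alpha> =
     (\<integral>\<omega>. payoff T A B C lam (\<alpha> u \<omega>) (Wagg W \<alpha> u \<omega>) (b u \<omega>) (bs \<omega>) (c u \<omega>) \<partial>M)"

definition admissibleG ::
  "real \<Rightarrow> 'w measure \<Rightarrow> (real \<Rightarrow> 'w measure) \<Rightarrow> (real \<Rightarrow> 'w \<Rightarrow> real \<Rightarrow> real) \<Rightarrow> bool" where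
  "admissibleG T M F \<alpha> \<longleftrightarrow>
     (\<lambda>(u, \<omega>, t). \<alpha> u \<omega> t) \<in> borel_measurable
        (restrict_space lebesgue {0..1} \<Otimes>\<^sub>M (M \<Otimes>\<^sub>M restrict_space lborel {0..T}))
     \<and> (\<forall>u\<in>{0..1}. progressive T F (\<alpha> u))
     \<and> (AE u in lborel. u \<in> {0..1} \<longrightarrow> L2proc T M (\<alpha> u))
     \<and> (\<integral>\<^sup>+ u \<in> {0..1}. (\<integral>\<^sup>+ t \<in> {0..T}. (\<integral>\<^sup>+ \<omega>. ennreal ((\<alpha> u \<omega> t)\<^sup>2) \<partial>M) \<partial>lborel) \<partial>lborel) < \<infinity>"

definition nash_graphon ::
  "real \<Rightarrow> 'w measure \<Rightarrow> (real \<Rightarrow> 'w measure) \<Rightarrow> (real \<Rightarrow> real \<Rightarrow> real) \<Rightarrow> (real \<Rightarrow> real \<Rightarrow> real)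
   \<Rightarrow> (real \<Rightarrow> real \<Rightarrow> real) \<Rightarrow> real \<Rightarrow> (real \<Rightarrow> real \<Rightarrow> real) \<Rightarrow> (real \<Rightarrow> 'w \<Rightarrow> real \<Rightarrow> real)
   \<Rightarrow> ('w \<Rightarrow> real \<Rightarrow> real) \<Rightarrow> (real \<Rightarrow> 'w \<Rightarrow> real) \<Rightarrow> (real \<Rightarrow> 'w \<Rightarrow> real \<Rightarrow> real) \<Rightarrow> bool" where
  "nash_graphon T M F A B C lam W b bs c \<alpha> \<longleftrightarrow>
     admissibleG T M F \<alpha> \<and>
     (AE u in lborel. u \<in> {0..1} \<longrightarrow>
        (\<forall>\<beta>. admissible T M F \<beta> \<longrightarrow>
           JW T M A B C lam W b bs c u (\<alpha>(u := \<beta>)) \<le> JW T M A B C lam W b bs c u \<alpha>))"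

definition stepP :: "nat \<Rightarrow> nat \<Rightarrow> real set" where
  "stepP N i = (if i < N then {(real i - 1) / real N ..< real i / real N}
                else {(real N - 1) / real N .. 1})"

text \<open>Index i in {1..N} of the step containing u (meaningful for u in [0,1]).\<close>
definition stepidx :: "nat \<Rightarrow> real \<Rightarrow> nat" where
  "stepidx N u = (THE i. i \<in> {1..N} \<and> u \<in> stepP N i)"

definition step :: "nat \<Rightarrow> (nat \<Rightarrow> 'a) \<Rightarrow> real \<Rightarrow> 'a" where
  "step N x u = x (stepidx N u)"

definition step_graphon :: "nat \<Rightarrow> (nat \<Rightarrow> nat \<Rightarrow> real) \<Rightarrow> real \<Rightarrow> real \<Rightarrow> real" where
  "step_graphon N w u v = w (stepidx N u) (stepidx N v)"

end

theory Submission
  imports Defs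
begin

text \<open>For a player u in the i-th step, the graphon aggregate of the step profile is
  exactly the finite-player aggregate of player i: the graphon integral of a step function is the
  normalised sum, and changing the profile at the single point u does not affect it, just as
  w_ii = 0 removes player i from its own aggregate.  Hence a unilateral deviation \<beta> changes both
  objectives by the same amount, namely the change of the player's own part of the payoff; the
  remaining terms depend only on the aggregate and are common to both sides.  Finally, a property
  of the step index holds for almost every u in [0,1] iff it holds for every player, since each
  step has positive length.\<close>

section \<open>Square integrable processes\<close>

definition time_measure :: "real \<Rightarrow> real measure" where
  "time_measure T = restrict_space lborel {0..T}"

lemma space_time_measure [simp]: "space (time_measure T) = {0..T}"
  by (simp add: time_measure_def)

lemma finite_measure_time_measure: "finite_measure (time_measure T)"
  unfolding time_measure_def
  by (intro finite_measureI) (cases "0 \<le> T"; simp add: emeasure_restrict_space)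

lemma sigma_finite_time_measure: "sigma_finite_measure (time_measure T)"
  using finite_measure_time_measure finite_measure.axioms(1) by blast

lemma emeasure_time_measure: "T \<ge> 0 \<Longrightarrow> emeasure (time_measure T) {0..T} = ennreal T"
  by (simp add: time_measure_def emeasure_restrict_space)

lemma set_integral_time_measure:
  "(LINT s:{0..T}|lborel. (f::real \<Rightarrow> real) s) = integral\<^sup>L (time_measure T) f"
  unfolding time_measure_def set_lebesgue_integral_def
  using integral_restrict_space[of "{0..T}" lborel f] by simp

lemma set_nn_integral_time_measure:
  "(\<integral>\<^sup>+ s\<in>{0..T}. f s \<partial>lborel) = integral\<^sup>N (time_measure T) f"
  unfolding time_measure_def by (simp add: nn_integral_restrict_space)

lemma ip_eq_integral: "ip T f g = (\<integral>s. f s * g s \<partial>time_measure T)"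
  unfolding ip_def set_integral_time_measure ..

lemma kop_eq_integral: "kop T G f t = (\<integral>s. G t s * f s \<partial>time_measure T)"
  unfolding kop_def set_integral_time_measure ..

lemma measurable_time [measurable]: "(\<lambda>x. x) \<in> borel_measurable (time_measure T)"
  unfolding time_measure_def by (simp add: measurable_restrict_space1)

definition sq_norm :: "real \<Rightarrow> 'w measure \<Rightarrow> ('w \<Rightarrow> real \<Rightarrow> real) \<Rightarrow> ennreal" where
  "sq_norm T M X = (\<integral>\<^sup>+ p. ennreal ((X (fst p) (snd p))\<^sup>2) \<partial>(M \<Otimes>\<^sub>M time_measure T))"

definition square_integrable :: "real \<Rightarrow> 'w measure \<Rightarrow> ('w \<Rightarrow> real \<Rightarrow> real) \<Rightarrow> bool" where
  "square_integrable T M X \<longleftrightarrow>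
     (\<lambda>p. X (fst p) (snd p)) \<in> borel_measurable (M \<Otimes>\<^sub>M time_measure T) \<and> sq_norm T M X < \<infinity>"

lemma ennreal_le_two_mult_add:
  "a \<le> 2 * x + 2 * y \<Longrightarrow> 0 \<le> x \<Longrightarrow> 0 \<le> y \<Longrightarrow> ennreal a \<le> 2 * ennreal x + 2 * ennreal y"
proof -
  assume "a \<le> 2 * x + 2 * y" "0 \<le> x" "0 \<le> y"
  then have "ennreal a \<le> ennreal (2 * x) + ennreal (2 * y)"
    by (simp add: ennreal_plus[symmetric] ennreal_leI del: ennreal_plus)
  then show ?thesis
    using \<open>0 \<le> x\<close> \<open>0 \<le> y\<close> by (simp add: ennreal_mult)
qed

lemma square_integrable_add:
  assumes "square_integrable T M X" "square_integrable T M Y"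
  shows "square_integrable T M (\<lambda>\<omega> t. X \<omega> t + Y \<omega> t)"
proof -
  have [measurable]: "(\<lambda>p. X (fst p) (snd p)) \<in> borel_measurable (M \<Otimes>\<^sub>M time_measure T)"
    "(\<lambda>p. Y (fst p) (snd p)) \<in> borel_measurable (M \<Otimes>\<^sub>M time_measure T)"
    using assms by (auto simp: square_integrable_def)
  have "sq_norm T M (\<lambda>\<omega> t. X \<omega> t + Y \<omega> t) \<le>
     (\<integral>\<^sup>+ p. 2 * ennreal ((X (fst p) (snd p))\<^sup>2) + 2 * ennreal ((Y (fst p) (snd p))\<^sup>2)
        \<partial>(M \<Otimes>\<^sub>M time_measure T))"
    unfolding sq_norm_def
  proof (intro nn_integral_mono ennreal_le_two_mult_add)
    fix x y :: real
    show "(x + y)\<^sup>2 \<le> 2 * x\<^sup>2 + 2 * y\<^sup>2"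
      by (smt (verit) zero_le_power2 power2_sum power2_diff)
  qed simp_all
  also have "\<dots> = 2 * sq_norm T M X + 2 * sq_norm T M Y"
    unfolding sq_norm_def by (simp add: nn_integral_add nn_integral_cmult)
  also have "\<dots> < \<infinity>"
    using assms by (simp add: square_integrable_def ennreal_mult_less_top)
  finally show ?thesis unfolding square_integrable_def by simp
qed

lemma square_integrable_cmult:
  assumes "square_integrable T M X"
  shows "square_integrable T M (\<lambda>\<omega> t. c * X \<omega> t)"
proof -
  have [measurable]: "(\<lambda>p. X (fst p) (snd p)) \<in> borel_measurable (M \<Otimes>\<^sub>M time_measure T)"
    using assms by (auto simp: square_integrable_def)
  have "sq_norm T M (\<lambda>\<omega> t. c * X \<omega> t) = ennreal (c\<^sup>2) * sq_norm T M X"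
    unfolding sq_norm_def
    by (subst nn_integral_cmult[symmetric]) (auto simp: power_mult_distrib ennreal_mult)
  also have "\<dots> < \<infinity>"
    using assms by (simp add: square_integrable_def ennreal_mult_less_top)
  finally show ?thesis unfolding square_integrable_def by simp
qed

lemma square_integrable_sum:
  assumes "finite I" "\<And>j. j \<in> I \<Longrightarrow> square_integrable T M (X j)"
  shows "square_integrable T M (\<lambda>\<omega> t. \<Sum>j\<in>I. X j \<omega> t)"
  using assms
proof (induction I rule: finite_induct)
  case empty
  then show ?case by (simp add: square_integrable_def sq_norm_def)
next
  case (insert x I)
  then show ?case
    using square_integrable_add[of T M "X x" "\<lambda>\<omega> t. \<Sum>j\<in>I. X j \<omega> t"] by simp
qed

lemma sq_norm_iterated:
  assumes "(\<lambda>p. X (fst p) (snd p)) \<in> borel_measurable (M \<Otimes>\<^sub>M time_measure T)"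
  shows "sq_norm T M X = (\<integral>\<^sup>+ \<omega>. (\<integral>\<^sup>+ t. ennreal ((X \<omega> t)\<^sup>2) \<partial>time_measure T) \<partial>M)"
  using assms unfolding sq_norm_def
  by (subst sigma_finite_measure.nn_integral_fst[OF sigma_finite_time_measure, symmetric]) auto

lemma L2proc_iff_sq_norm_finite:
  assumes "sigma_finite_measure M"
    and X: "(\<lambda>p. X (fst p) (snd p)) \<in> borel_measurable (M \<Otimes>\<^sub>M time_measure T)"
  shows "L2proc T M X \<longleftrightarrow> sq_norm T M X < \<infinity>"
proof -
  interpret pair_sigma_finite M "time_measure T"
    by (intro pair_sigma_finite.intro assms(1) sigma_finite_time_measure)
  have [measurable]: "(\<lambda>p. X (fst p) (snd p)) \<in> borel_measurable (M \<Otimes>\<^sub>M time_measure T)"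
    by (fact X)
  have "(\<integral>\<^sup>+ t\<in>{0..T}. (\<integral>\<^sup>+ \<omega>. ennreal ((X \<omega> t)\<^sup>2) \<partial>M) \<partial>lborel)
      = (\<integral>\<^sup>+ t. (\<integral>\<^sup>+ \<omega>. ennreal ((X \<omega> t)\<^sup>2) \<partial>M) \<partial>time_measure T)"
    by (rule set_nn_integral_time_measure)
  also have "\<dots> = (\<integral>\<^sup>+ \<omega>. (\<integral>\<^sup>+ t. ennreal ((X \<omega> t)\<^sup>2) \<partial>time_measure T) \<partial>M)"
    by (rule Fubini') measurable
  also have "\<dots> = sq_norm T M X"
    using sq_norm_iterated[OF X] by simp
  finally show ?thesis unfolding L2proc_def by simp
qed

lemma measurable_id_coarser:
  assumes "sets N \<subseteq> sets M" "space N = space M"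
  shows "(\<lambda>x. x) \<in> measurable M N"
  unfolding measurable_def using assms sets.sets_into_space[of _ N]
  by (auto simp: Int_absorb2)

lemma square_integrable_if_progressive:
  assumes sub: "sets (F T) \<subseteq> sets M" "space (F T) = space M"
    and "sigma_finite_measure M" "T \<ge> 0"
    and "progressive T F X" "L2proc T M X"
  shows "square_integrable T M X"
proof -
  have "(\<lambda>(\<omega>, s). X \<omega> s) \<in> borel_measurable (F T \<Otimes>\<^sub>M time_measure T)"
    using assms unfolding progressive_def time_measure_def by auto
  moreover have "(\<lambda>p. (fst p, snd p)) \<in> measurable (M \<Otimes>\<^sub>M time_measure T) (F T \<Otimes>\<^sub>M time_measure T)"
    by (intro measurable_Pair measurable_compose[OF measurable_fst measurable_id_coarser[OF sub]]
        measurable_snd)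
  ultimately have X: "(\<lambda>p. X (fst p) (snd p)) \<in> borel_measurable (M \<Otimes>\<^sub>M time_measure T)"
    using measurable_compose by (fastforce simp: case_prod_beta)
  then show ?thesis
    using L2proc_iff_sq_norm_finite[OF assms(3) X] assms unfolding square_integrable_def by simp
qed

section \<open>Integrability of the payoff\<close>

lemma ennreal_norm_integral_le:
  fixes f :: "'a \<Rightarrow> real"
  shows "ennreal (norm (integral\<^sup>L N f)) \<le> (\<integral>\<^sup>+ x. ennreal (norm (f x)) \<partial>N)"
  using integral_norm_bound_ennreal[of N f]
  by (cases "integrable N f") (auto simp: not_integrable_integral_eq)

lemma abs_mult_le_sum_squares: "\<bar>(a::real) * b\<bar> \<le> a\<^sup>2 + b\<^sup>2"
proof -
  have "2 * (\<bar>a\<bar> * \<bar>b\<bar>) \<le> a\<^sup>2 + b\<^sup>2"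
    using zero_le_power2[of "\<bar>a\<bar> - \<bar>b\<bar>"] by (simp add: power2_diff)
  moreover have "0 \<le> \<bar>a\<bar> * \<bar>b\<bar>" by simp
  ultimately show ?thesis unfolding abs_mult by linarith
qed

lemma integrable_ip:
  assumes "sigma_finite_measure M" and X: "square_integrable T M X" and Y: "square_integrable T M Y"
  shows "integrable M (\<lambda>\<omega>. ip T (X \<omega>) (Y \<omega>))"
proof -
  have [measurable]: "(\<lambda>p. X (fst p) (snd p)) \<in> borel_measurable (M \<Otimes>\<^sub>M time_measure T)"
    "(\<lambda>p. Y (fst p) (snd p)) \<in> borel_measurable (M \<Otimes>\<^sub>M time_measure T)"
    using X Y by (auto simp: square_integrable_def)
  have "case_prod (\<lambda>\<omega> s. X \<omega> s * Y \<omega> s) \<in> borel_measurable (M \<Otimes>\<^sub>M time_measure T)"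
    by (simp add: case_prod_beta')
  then have meas: "(\<lambda>\<omega>. ip T (X \<omega>) (Y \<omega>)) \<in> borel_measurable M"
    unfolding ip_eq_integral
    by (rule sigma_finite_measure.borel_measurable_lebesgue_integral[OF sigma_finite_time_measure])
  have "(\<integral>\<^sup>+ \<omega>. ennreal (norm (ip T (X \<omega>) (Y \<omega>))) \<partial>M)
      \<le> (\<integral>\<^sup>+ \<omega>. (\<integral>\<^sup>+ s. ennreal ((X \<omega> s)\<^sup>2) + ennreal ((Y \<omega> s)\<^sup>2) \<partial>time_measure T) \<partial>M)"
  proof (intro nn_integral_mono)
    fix \<omega>
    have "ennreal (norm (ip T (X \<omega>) (Y \<omega>)))
        \<le> (\<integral>\<^sup>+ s. ennreal (norm (X \<omega> s * Y \<omega> s)) \<partial>time_measure T)"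
      unfolding ip_eq_integral by (rule ennreal_norm_integral_le)
    also have "\<dots> \<le> (\<integral>\<^sup>+ s. ennreal ((X \<omega> s)\<^sup>2) + ennreal ((Y \<omega> s)\<^sup>2) \<partial>time_measure T)"
      using abs_mult_le_sum_squares
      by (intro nn_integral_mono) (simp add: ennreal_plus[symmetric] ennreal_leI del: ennreal_plus)
    finally show "ennreal (norm (ip T (X \<omega>) (Y \<omega>)))
        \<le> (\<integral>\<^sup>+ s. ennreal ((X \<omega> s)\<^sup>2) + ennreal ((Y \<omega> s)\<^sup>2) \<partial>time_measure T)" .
  qed
  also have "\<dots> = (\<integral>\<^sup>+ p. ennreal ((X (fst p) (snd p))\<^sup>2) + ennreal ((Y (fst p) (snd p))\<^sup>2)
      \<partial>(M \<Otimes>\<^sub>M time_measure T))"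
    by (subst sigma_finite_measure.nn_integral_fst[OF sigma_finite_time_measure, symmetric]) auto
  also have "\<dots> = sq_norm T M X + sq_norm T M Y"
    unfolding sq_norm_def by (rule nn_integral_add) auto
  also have "\<dots> < \<infinity>"
    using X Y by (simp add: square_integrable_def)
  finally show ?thesis by (intro integrableI_bounded meas)
qed

lemma measurable_kernel_comp:
  fixes G :: "real \<Rightarrow> real \<Rightarrow> real"
  assumes "case_prod G \<in> borel_measurable borel" "f \<in> borel_measurable N" "g \<in> borel_measurable N"
  shows "(\<lambda>x. G (f x) (g x)) \<in> borel_measurable N"
proof -
  have "(\<lambda>x. (f x, g x)) \<in> measurable N borel"
    using measurable_Pair[OF assms(2,3)] by (simp only: borel_prod)
  from measurable_compose[OF this assms(1)] show ?thesis by simp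
qed

lemma measurable_kadj:
  assumes "case_prod G \<in> borel_measurable borel"
  shows "case_prod (kadj G) \<in> borel_measurable borel"
proof -
  have "fst \<in> borel_measurable (borel :: (real \<times> real) measure)"
    "snd \<in> borel_measurable (borel :: (real \<times> real) measure)"
    using measurable_fst[of "borel::real measure" "borel::real measure"]
      measurable_snd[of "borel::real measure" "borel::real measure"]
    by (simp_all only: borel_prod)
  then show ?thesis
    using measurable_kernel_comp[OF assms] by (simp add: kadj_def case_prod_beta')
qed

text \<open>The kernels are required to act boundedly on square integrable paths; by Cauchy-Schwarz
  this follows from a uniform bound on the L2 norms of the rows, which is Assumption (W).\<close>

definition row_bounded_kernel :: "real \<Rightarrow> (real \<Rightarrow> real \<Rightarrow> real) \<Rightarrow> bool" where
  "row_bounded_kernel T G \<longleftrightarrow> case_prod G \<in> borel_measurable borel \<and>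
     (\<exists>K. \<forall>t\<in>{0..T}. (\<integral>\<^sup>+ s\<in>{0..T}. ennreal ((G t s)\<^sup>2) \<partial>lborel) \<le> ennreal K)"

lemma row_bounded_kernelI:
  assumes "case_prod G \<in> borel_measurable borel" and le: "\<And>t s. (G t s)\<^sup>2 \<le> H t s"
    and K: "\<forall>t\<in>{0..T}. (\<integral>\<^sup>+ s\<in>{0..T}. ennreal (H t s) \<partial>lborel) \<le> ennreal K"
  shows "row_bounded_kernel T G"
  unfolding row_bounded_kernel_def
proof (intro conjI assms exI ballI)
  fix t :: real assume "t \<in> {0..T}"
  have "(\<integral>\<^sup>+ s\<in>{0..T}. ennreal ((G t s)\<^sup>2) \<partial>lborel) \<le> (\<integral>\<^sup>+ s\<in>{0..T}. ennreal (H t s) \<partial>lborel)"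
    by (intro nn_integral_mono mult_right_mono ennreal_leI le) simp
  also have "\<dots> \<le> ennreal K"
    using K \<open>t \<in> {0..T}\<close> by blast
  finally show "(\<integral>\<^sup>+ s\<in>{0..T}. ennreal ((G t s)\<^sup>2) \<partial>lborel) \<le> ennreal K" .
qed

lemma row_bounded_kernels_of_uniform_bound:
  assumes mA: "case_prod A \<in> borel_measurable borel" and mB: "case_prod B \<in> borel_measurable borel"
    and bound: "\<exists>K::real.
      (\<forall>t\<in>{0..T}. (\<integral>\<^sup>+ s \<in> {0..T}. ennreal ((A t s)\<^sup>2 + (B t s)\<^sup>2) \<partial>lborel) \<le> ennreal K) \<and>
      (\<forall>s\<in>{0..T}. (\<integral>\<^sup>+ t \<in> {0..T}. ennreal ((A t s)\<^sup>2 + (B t s)\<^sup>2) \<partial>lborel) \<le> ennreal K)"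
  shows "row_bounded_kernel T A" "row_bounded_kernel T B" "row_bounded_kernel T (kadj B)"
proof -
  obtain K where
    rows: "\<forall>t\<in>{0..T}. (\<integral>\<^sup>+ s\<in>{0..T}. ennreal ((A t s)\<^sup>2 + (B t s)\<^sup>2) \<partial>lborel) \<le> ennreal K"
    and cols: "\<forall>t\<in>{0..T}. (\<integral>\<^sup>+ s\<in>{0..T}. ennreal ((A s t)\<^sup>2 + (B s t)\<^sup>2) \<partial>lborel) \<le> ennreal K"
    using bound by blast
  show "row_bounded_kernel T A" "row_bounded_kernel T B" "row_bounded_kernel T (kadj B)"
    using row_bounded_kernelI[OF mA _ rows] row_bounded_kernelI[OF mB _ rows]
      row_bounded_kernelI[OF measurable_kadj[OF mB] _ cols] by (simp_all add: kadj_def)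
qed

lemma square_integrable_kop:
  assumes "sigma_finite_measure M" "T \<ge> 0" and G: "row_bounded_kernel T G"
    and X: "square_integrable T M X"
  shows "square_integrable T M (\<lambda>\<omega> t. kop T G (X \<omega>) t)"
proof -
  obtain K where mG: "case_prod G \<in> borel_measurable borel"
    and K: "\<forall>t\<in>{0..T}. (\<integral>\<^sup>+ s. ennreal ((G t s)\<^sup>2) \<partial>time_measure T) \<le> ennreal K"
    using G unfolding row_bounded_kernel_def set_nn_integral_time_measure by blast
  have mX[measurable]: "(\<lambda>p. X (fst p) (snd p)) \<in> borel_measurable (M \<Otimes>\<^sub>M time_measure T)"
    using X by (auto simp: square_integrable_def)
  let ?MTT = "(M \<Otimes>\<^sub>M time_measure T) \<Otimes>\<^sub>M time_measure T"
  have "(\<lambda>q. G (snd (fst q)) (snd q)) \<in> borel_measurable ?MTT"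
    by (rule measurable_kernel_comp[OF mG]) measurable
  moreover have "(\<lambda>q. X (fst (fst q)) (snd q)) \<in> borel_measurable ?MTT"
    using measurable_compose[of "\<lambda>q. (fst (fst q), snd q)" ?MTT, OF _ mX] by simp
  ultimately have "case_prod (\<lambda>p s. G (snd p) s * X (fst p) s) \<in> borel_measurable ?MTT"
    by (simp add: case_prod_beta')
  then have meas[measurable]:
    "(\<lambda>p. kop T G (X (fst p)) (snd p)) \<in> borel_measurable (M \<Otimes>\<^sub>M time_measure T)"
    unfolding kop_eq_integral
    by (rule sigma_finite_measure.borel_measurable_lebesgue_integral[OF sigma_finite_time_measure])
  have pointwise: "ennreal ((kop T G (X \<omega>) t)\<^sup>2)
      \<le> ennreal K * (\<integral>\<^sup>+ s. ennreal ((X \<omega> s)\<^sup>2) \<partial>time_measure T)"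
    if \<omega>: "\<omega> \<in> space M" and t: "t \<in> {0..T}" for \<omega> t
  proof -
    have mg: "(\<lambda>s. ennreal \<bar>G t s\<bar>) \<in> borel_measurable (time_measure T)"
      using measurable_kernel_comp[OF mG, of "\<lambda>s. t" "time_measure T" "\<lambda>s. s"] by simp
    have mx: "(\<lambda>s. ennreal \<bar>X \<omega> s\<bar>) \<in> borel_measurable (time_measure T)"
      using measurable_Pair2[OF mX \<omega>] by simp
    have "ennreal ((kop T G (X \<omega>) t)\<^sup>2) = (ennreal (norm (kop T G (X \<omega>) t)))\<^sup>2"
      by (simp add: ennreal_power)
    also have "\<dots> \<le> (\<integral>\<^sup>+ s. ennreal \<bar>G t s\<bar> * ennreal \<bar>X \<omega> s\<bar> \<partial>time_measure T)\<^sup>2"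
      unfolding kop_eq_integral
      by (intro power_mono order.trans[OF ennreal_norm_integral_le])
        (simp_all add: abs_mult ennreal_mult)
    also have "\<dots> \<le> (\<integral>\<^sup>+ s. (ennreal \<bar>G t s\<bar>)\<^sup>2 \<partial>time_measure T)
        * (\<integral>\<^sup>+ s. (ennreal \<bar>X \<omega> s\<bar>)\<^sup>2 \<partial>time_measure T)"
      by (rule Cauchy_Schwarz_nn_integral[OF mg mx])
    also have "\<dots> \<le> ennreal K * (\<integral>\<^sup>+ s. ennreal ((X \<omega> s)\<^sup>2) \<partial>time_measure T)"
      using K t by (simp add: ennreal_power mult_right_mono)
    finally show ?thesis .
  qed
  have "sq_norm T M (\<lambda>\<omega> t. kop T G (X \<omega>) t)
      = (\<integral>\<^sup>+ \<omega>. (\<integral>\<^sup>+ t. ennreal ((kop T G (X \<omega>) t)\<^sup>2) \<partial>time_measure T) \<partial>M)"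
    by (rule sq_norm_iterated) simp
  also have "\<dots> \<le> (\<integral>\<^sup>+ \<omega>. (\<integral>\<^sup>+ t. ennreal K * (\<integral>\<^sup>+ s. ennreal ((X \<omega> s)\<^sup>2) \<partial>time_measure T)
      \<partial>time_measure T) \<partial>M)"
    using pointwise by (intro nn_integral_mono) auto
  also have "\<dots> = (\<integral>\<^sup>+ \<omega>. (ennreal K * ennreal T) * (\<integral>\<^sup>+ s. ennreal ((X \<omega> s)\<^sup>2) \<partial>time_measure T) \<partial>M)"
    using emeasure_time_measure[OF \<open>T \<ge> 0\<close>] by (simp add: mult.assoc mult.commute[of _ "ennreal T"])
  also have "\<dots> = (ennreal K * ennreal T) * sq_norm T M X"
    by (subst nn_integral_cmult)
      (auto simp: sq_norm_iterated[OF mX]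
        intro: sigma_finite_measure.borel_measurable_nn_integral[OF sigma_finite_time_measure])
  also have "\<dots> < \<infinity>"
    using X by (simp add: square_integrable_def ennreal_mult_less_top)
  finally show ?thesis using meas unfolding square_integrable_def by simp
qed

definition own_payoff ::
  "real \<Rightarrow> (real \<Rightarrow> real \<Rightarrow> real) \<Rightarrow> (real \<Rightarrow> real \<Rightarrow> real) \<Rightarrow> real
   \<Rightarrow> (real \<Rightarrow> real) \<Rightarrow> (real \<Rightarrow> real) \<Rightarrow> (real \<Rightarrow> real) \<Rightarrow> real" where
  "own_payoff T A B lam a z b =
     - ip T a (\<lambda>t. kop T A a t + lam * a t)
     - ip T a (\<lambda>t. kop T B z t + kop T (kadj B) z t) + ip T b a"

definition aggregate_payoff ::
  "real \<Rightarrow> (real \<Rightarrow> real \<Rightarrow> real) \<Rightarrow> (real \<Rightarrow> real) \<Rightarrow> (real \<Rightarrow> real) \<Rightarrow> real" where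
  "aggregate_payoff T C z bs = - ip T z (kop T C z) + ip T bs z"

lemma payoff_split:
  "payoff T A B C lam a z b bs c = own_payoff T A B lam a z b + aggregate_payoff T C z bs + c"
  by (simp add: payoff_def own_payoff_def aggregate_payoff_def)

lemma integrable_own_payoff:
  assumes "sigma_finite_measure M" "T \<ge> 0"
    and kernels: "row_bounded_kernel T A" "row_bounded_kernel T B" "row_bounded_kernel T (kadj B)"
    and a: "square_integrable T M a" and z: "square_integrable T M z"
    and b: "square_integrable T M b"
  shows "integrable M (\<lambda>\<omega>. own_payoff T A B lam (a \<omega>) (z \<omega>) (b \<omega>))"
proof -
  note kop = square_integrable_kop[OF assms(1,2)]
  have "square_integrable T M (\<lambda>\<omega> t. kop T A (a \<omega>) t + lam * a \<omega> t)"
    by (intro square_integrable_add square_integrable_cmult kop kernels a)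
  moreover have "square_integrable T M (\<lambda>\<omega> t. kop T B (z \<omega>) t + kop T (kadj B) (z \<omega>) t)"
    by (intro square_integrable_add kop kernels z)
  ultimately show ?thesis
    unfolding own_payoff_def using assms(1) a b by (intro Bochner_Integration.integrable_add
        Bochner_Integration.integrable_diff Bochner_Integration.integrable_minus integrable_ip)
qed

text \<open>This holds even when g is not integrable: then all four integrands are non-integrable and
  all four integrals take the junk value 0.\<close>

lemma integral_add_le_iff_shift:
  fixes f1 f2 g c1 c2 :: "'a \<Rightarrow> real"
  assumes "integrable M f1" "integrable M f2" "integrable M c1" "integrable M c2"
  shows "((\<integral>\<omega>. f1 \<omega> + g \<omega> + c1 \<omega> \<partial>M) \<le> (\<integral>\<omega>. f2 \<omega> + g \<omega> + c1 \<omega> \<partial>M)) \<longleftrightarrow>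
         ((\<integral>\<omega>. f1 \<omega> + g \<omega> + c2 \<omega> \<partial>M) \<le> (\<integral>\<omega>. f2 \<omega> + g \<omega> + c2 \<omega> \<partial>M))"
proof (cases "integrable M g")
  case True
  then show ?thesis using assms by simp
next
  case False
  have not_int: "\<not> integrable M (\<lambda>\<omega>. f \<omega> + g \<omega> + c \<omega>)" if "integrable M f" "integrable M c" for f c
  proof
    assume "integrable M (\<lambda>\<omega>. f \<omega> + g \<omega> + c \<omega>)"
    then have "integrable M (\<lambda>\<omega>. (f \<omega> + g \<omega> + c \<omega>) - f \<omega> - c \<omega>)"
      using that by (intro Bochner_Integration.integrable_diff)
    then show False using False by simp
  qed
  show ?thesis
    using not_int[OF assms(1,3)] not_int[OF assms(2,3)] not_int[OF assms(1,4)] not_int[OF assms(2,4)]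
    by (simp add: not_integrable_integral_eq)
qed

section \<open>Steps of the unit interval\<close>

lemma stepP_subset:
  assumes "i \<in> {1..N}"
  shows "stepP N i \<subseteq> {0..1}"
proof
  fix v assume v: "v \<in> stepP N i"
  have "0 \<le> (real i - 1) / real N" "0 \<le> (real N - 1) / real N"
    using assms by auto
  moreover have "real i / real N \<le> 1"
    using assms by (simp add: divide_le_eq_1)
  moreover have "(real i - 1) / real N \<le> v \<and> v < real i / real N \<or> (real N - 1) / real N \<le> v \<and> v \<le> 1"
    using v by (auto simp: stepP_def split: if_splits)
  ultimately show "v \<in> {0..1}"
    by (simp only: atLeastAtMost_iff) linarith
qed

lemma stepP_disjoint:
  assumes "i \<in> {1..N}" "j \<in> {1..N}" "v \<in> stepP N i" "v \<in> stepP N j"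
  shows "i = j"
proof -
  have ordered: False if "a \<in> {1..N}" "b \<in> {1..N}" "a < b" "v \<in> stepP N a" "v \<in> stepP N b"
    for a b
  proof -
    have "a < N" using that by simp
    then have "v < real a / real N"
      using that(4) by (simp add: stepP_def)
    moreover have "(real b - 1) / real N \<le> v"
    proof (cases "b < N")
      case False
      then have "b = N" using that(2) by simp
      then show ?thesis using that(5) by (simp add: stepP_def)
    qed (use that(5) in \<open>simp add: stepP_def\<close>)
    moreover have "real a / real N \<le> (real b - 1) / real N"
      using that by (intro divide_right_mono) auto
    ultimately show False by linarith
  qed
  show ?thesis
  proof (rule ccontr)
    assume "i \<noteq> j"
    then consider "i < j" | "j < i" by linarith
    then show False
      using assms ordered[of i j] ordered[of j i] by cases blast+
  qed
qed

lemma stepP_cover: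
  assumes "N \<ge> 1" and v: "v \<in> {0..1}"
  shows "\<exists>i\<in>{1..N}. v \<in> stepP N i"
proof -
  define k where "k = nat \<lfloor>v * real N\<rfloor>"
  have N: "real N > 0" using assms by auto
  have "0 \<le> v * real N" using v by auto
  then have k: "real k \<le> v * real N" "v * real N < real k + 1"
    unfolding k_def by linarith+
  show ?thesis
  proof (cases "k + 1 < N")
    case True
    have "(real (k + 1) - 1) / real N \<le> v" "v < real (k + 1) / real N"
      using k N by (simp_all add: divide_le_eq less_divide_eq)
    with True show ?thesis by (intro bexI[of _ "k + 1"]) (auto simp: stepP_def)
  next
    case False
    then have "(real N - 1) / real N \<le> v" using k N by (simp add: divide_le_eq)
    with v assms show ?thesis by (intro bexI[of _ N]) (auto simp: stepP_def)
  qed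
qed

lemma stepidx_eq: "i \<in> {1..N} \<Longrightarrow> v \<in> stepP N i \<Longrightarrow> stepidx N v = i"
  unfolding stepidx_def using stepP_disjoint by (intro the_equality) blast+

lemma stepidx_in:
  assumes "N \<ge> 1" "v \<in> {0..1}"
  shows "stepidx N v \<in> {1..N}" "v \<in> stepP N (stepidx N v)"
  using stepP_cover[OF assms] stepidx_eq by metis+

lemma stepP_borel [measurable]: "stepP N i \<in> sets borel"
  by (simp add: stepP_def)

lemma emeasure_stepP:
  assumes "i \<in> {1..N}"
  shows "emeasure lborel (stepP N i) = ennreal (1 / real N)"
proof (cases "i < N")
  case True
  have "(real i - 1) / real N \<le> real i / real N"
    using assms by (intro divide_right_mono) auto
  then show ?thesis using True assms by (simp add: stepP_def diff_divide_distrib)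
next
  case False
  have "(real N - 1) / real N \<le> 1"
    using assms by (simp add: divide_le_eq_1)
  then show ?thesis using False assms by (simp add: stepP_def diff_divide_distrib)
qed

lemma sum_indicator_stepP:
  assumes "N \<ge> 1"
  shows "(\<Sum>j\<in>{1..N}. indicator (stepP N j) v * (c j :: real))
    = indicator {0..1} v * c (stepidx N v)"
proof (cases "v \<in> {0..1}")
  case True
  note v = stepidx_in[OF assms True]
  have "(\<Sum>j\<in>{1..N}. indicator (stepP N j) v * c j) = (\<Sum>j\<in>{1..N}. if j = stepidx N v then c j else 0)"
    using v stepP_disjoint by (intro sum.cong) (auto simp: indicator_def)
  then show ?thesis using True v by simp
next
  case False
  then have "\<forall>j\<in>{1..N}. v \<notin> stepP N j"
    using stepP_subset by blast
  then show ?thesis using False by (simp add: indicator_def)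
qed

lemma AE_in_pos_measure_ex:
  assumes "AE x in M. P x" "S \<in> sets M" "emeasure M S > 0"
  shows "\<exists>x\<in>S. P x"
proof (rule ccontr)
  assume none: "\<not> (\<exists>x\<in>S. P x)"
  have "{x \<in> space M. \<not> x \<notin> S} = S"
    using sets.sets_into_space[OF assms(2)] by auto
  note null_iff = AE_iff_measurable[OF assms(2) this]
  from assms(1) have "AE x in M. x \<notin> S"
    by (rule AE_mp) (use none in \<open>intro AE_I2, blast\<close>)
  then show False
    using assms(3) unfolding null_iff by simp
qed

lemma AE_stepidx_iff:
  assumes "N \<ge> 1"
  shows "(AE u in lborel. u \<in> {0..1} \<longrightarrow> P (stepidx N u)) \<longleftrightarrow> (\<forall>i\<in>{1..N}. P i)"
proof
  assume AE: "AE u in lborel. u \<in> {0..1} \<longrightarrow> P (stepidx N u)"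
  show "\<forall>i\<in>{1..N}. P i"
  proof
    fix i assume i: "i \<in> {1..N}"
    from AE have "AE u in lborel. u \<in> stepP N i \<longrightarrow> P i"
      by eventually_elim (use i stepP_subset stepidx_eq in blast)
    moreover have "stepP N i \<in> sets lborel" "emeasure lborel (stepP N i) > 0"
      using emeasure_stepP[OF i] assms by simp_all
    ultimately obtain u where "u \<in> stepP N i" "u \<in> stepP N i \<longrightarrow> P i"
      using AE_in_pos_measure_ex by blast
    then show "P i" by blast
  qed
next
  assume "\<forall>i\<in>{1..N}. P i"
  then show "AE u in lborel. u \<in> {0..1} \<longrightarrow> P (stepidx N u)"
    using stepidx_in(1)[OF assms] by (intro AE_I2) blast
qed

section \<open>Step profiles in the graphon game\<close>

lemma Wagg_step_graphon:
  assumes N: "N \<ge> 1" and "u \<in> {0..1}" and \<alpha>': "\<And>v. v \<noteq> u \<Longrightarrow> \<alpha>' v = \<alpha> (stepidx N v)"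
  shows "Wagg (step_graphon N w) \<alpha>' u = abar N w \<alpha> (stepidx N u)"
proof (intro ext)
  fix \<omega> t
  define i where "i = stepidx N u"
  define c where "c j = w i j * \<alpha> j \<omega> t" for j
  define g where "g v = (\<Sum>j\<in>{1..N}. indicator (stepP N j) v * c j)" for v
  have [measurable]: "g \<in> borel_measurable lborel"
    unfolding g_def by measurable
  have "(\<lambda>v. indicator {0..1} v *\<^sub>R (w i (stepidx N v) * \<alpha>' v \<omega> t))
      = (\<lambda>v. if v = u then indicator {0..1} u * (w i i * \<alpha>' u \<omega> t) else g v)"
    using sum_indicator_stepP[OF N, of _ c] \<alpha>' by (auto simp: g_def c_def i_def)
  then have "Wagg (step_graphon N w) \<alpha>' u \<omega> t
      = (\<integral>v. (if v = u then indicator {0..1} u * (w i i * \<alpha>' u \<omega> t) else g v) \<partial>lborel)"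
    unfolding Wagg_def set_lebesgue_integral_def step_graphon_def i_def[symmetric] by simp
  also have "\<dots> = (\<integral>v. g v \<partial>lborel)"
  proof (rule integral_cong_AE)
    show "AE v in lborel. (if v = u then indicator {0..1} u * (w i i * \<alpha>' u \<omega> t) else g v) = g v"
      using AE_lborel_singleton[of u] by eventually_elim simp
  qed simp_all
  also have "\<dots> = (\<Sum>j\<in>{1..N}. measure lborel (stepP N j) * c j)"
    unfolding g_def using emeasure_stepP
    by (subst Bochner_Integration.integral_sum) auto
  also have "\<dots> = abar N w \<alpha> i \<omega> t"
    using emeasure_stepP by (simp add: abar_def c_def measure_def sum_distrib_left)
  finally show "Wagg (step_graphon N w) \<alpha>' u \<omega> t = abar N w \<alpha> (stepidx N u) \<omega> t"
    by (simp add: i_def)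
qed

lemma admissibleG_step:
  assumes N: "N \<ge> 1" and sub: "sets (F T) \<subseteq> sets M" "space (F T) = space M"
    and "sigma_finite_measure M" "T \<ge> 0"
    and adm: "\<forall>j\<in>{1..N}. admissible T M F (\<alpha> j)"
  shows "admissibleG T M F (step N \<alpha>)"
proof -
  let ?S = "restrict_space (lebesgue :: real measure) {0..1} \<Otimes>\<^sub>M (M \<Otimes>\<^sub>M restrict_space lborel {0..T})"
  have "(\<lambda>x. \<Sum>j\<in>{1..N}. indicator (stepP N j) (fst x) * \<alpha> j (fst (snd x)) (snd (snd x)))
      \<in> borel_measurable ?S"
  proof (intro borel_measurable_sum borel_measurable_times)
    fix j assume j: "j \<in> {1..N}"
    have "(\<lambda>u. indicator (stepP N j) u :: real) \<in> borel_measurable lebesgue"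
      using stepP_borel[of N j] by (intro borel_measurable_indicator) auto
    then show "(\<lambda>x. indicator (stepP N j) (fst x) :: real) \<in> borel_measurable ?S"
      by (intro measurable_compose[OF measurable_fst] measurable_restrict_space1)
    have "square_integrable T M (\<alpha> j)"
      using adm j square_integrable_if_progressive[of F T M, OF sub assms(4,5)] by (auto simp: admissible_def)
    then have "(\<lambda>p. \<alpha> j (fst p) (snd p)) \<in> borel_measurable (M \<Otimes>\<^sub>M restrict_space lborel {0..T})"
      by (simp add: square_integrable_def time_measure_def)
    then show "(\<lambda>x. \<alpha> j (fst (snd x)) (snd (snd x))) \<in> borel_measurable ?S"
      using measurable_compose[OF measurable_snd] by blast
  qed
  then have meas: "(\<lambda>(u, \<omega>, t). step N \<alpha> u \<omega> t) \<in> borel_measurable ?S"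
  proof (subst measurable_cong)
    fix x :: "real \<times> _ \<times> real" assume "x \<in> space ?S"
    then have "fst x \<in> {0..1}" by (auto simp: space_pair_measure)
    then show "(\<lambda>(u, \<omega>, t). step N \<alpha> u \<omega> t) x
        = (\<Sum>j\<in>{1..N}. indicator (stepP N j) (fst x) * \<alpha> j (fst (snd x)) (snd (snd x)))"
      using sum_indicator_stepP[OF N, of "fst x" "\<lambda>j. \<alpha> j (fst (snd x)) (snd (snd x))"]
      by (auto simp: step_def split: prod.splits)
  qed
  define L where "L j = (\<integral>\<^sup>+ t\<in>{0..T}. (\<integral>\<^sup>+ \<omega>. ennreal ((\<alpha> j \<omega> t)\<^sup>2) \<partial>M) \<partial>lborel)" for j
  have "(\<integral>\<^sup>+ u\<in>{0..1}. (\<integral>\<^sup>+ t\<in>{0..T}. (\<integral>\<^sup>+ \<omega>. ennreal ((step N \<alpha> u \<omega> t)\<^sup>2) \<partial>M) \<partial>lborel) \<partial>lborel)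
      \<le> (\<integral>\<^sup>+ (u::real)\<in>{0..1}. (\<Sum>j\<in>{1..N}. L j) \<partial>lborel)"
  proof (rule nn_integral_mono)
    fix u :: real
    have "u \<in> {0..1} \<Longrightarrow> L (stepidx N u) \<le> (\<Sum>j\<in>{1..N}. L j)"
      using stepidx_in[OF N] by (intro member_le_sum) auto
    then show "(\<integral>\<^sup>+ t\<in>{0..T}. (\<integral>\<^sup>+ \<omega>. ennreal ((step N \<alpha> u \<omega> t)\<^sup>2) \<partial>M) \<partial>lborel)
        * indicator {0..1} u \<le> (\<Sum>j\<in>{1..N}. L j) * indicator {0..1} u"
      by (cases "u \<in> {0..1}") (simp_all add: step_def L_def)
  qed
  also have "\<dots> = (\<Sum>j\<in>{1..N}. L j)"
    by (simp add: nn_integral_cmult_indicator)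
  also have "\<dots> < \<infinity>"
    using adm by (simp add: L_def admissible_def L2proc_def less_top)
  finally show ?thesis
    using meas adm stepidx_in[OF N] by (auto simp: admissibleG_def step_def admissible_def)
qed

lemma admissibleG_step_iff:
  assumes "N \<ge> 1" "sets (F T) \<subseteq> sets M" "space (F T) = space M"
    "sigma_finite_measure M" "T \<ge> 0"
  shows "admissibleG T M F (step N \<alpha>) \<longleftrightarrow> (\<forall>j\<in>{1..N}. admissible T M F (\<alpha> j))"
proof
  assume "admissibleG T M F (step N \<alpha>)"
  then have prog: "\<forall>u\<in>{0..1}. progressive T F (\<alpha> (stepidx N u))"
    and "AE u in lborel. u \<in> {0..1} \<longrightarrow> L2proc T M (\<alpha> (stepidx N u))"
    by (simp_all add: admissibleG_def step_def)
  then have "AE u in lborel. u \<in> {0..1} \<longrightarrow> admissible T M F (\<alpha> (stepidx N u))"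
    by eventually_elim (use prog in \<open>simp add: admissible_def\<close>)
  then show "\<forall>j\<in>{1..N}. admissible T M F (\<alpha> j)"
    using AE_stepidx_iff[OF assms(1), of "\<lambda>j. admissible T M F (\<alpha> j)"] by simp
qed (rule admissibleG_step[where F=F and T=T and M=M, OF assms])

lemma deviation_payoff_le_iff:
  assumes "sigma_finite_measure M" "T \<ge> 0"
    and kernels: "row_bounded_kernel T A" "row_bounded_kernel T B" "row_bounded_kernel T (kadj B)"
    and N: "N \<ge> 1" and u: "u \<in> {0..1}" and i: "stepidx N u = i" and wii: "w i i = 0"
    and \<alpha>: "\<forall>j\<in>{1..N}. square_integrable T M (\<alpha> j)" and \<beta>: "square_integrable T M \<beta>"
    and b: "square_integrable T M (b i)"
    and c: "integrable M (c i)" and cg: "integrable M (cg u)"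
  shows "JW T M A B C lam (step_graphon N w) (step N b) bs cg u ((step N \<alpha>)(u := \<beta>))
           \<le> JW T M A B C lam (step_graphon N w) (step N b) bs cg u (step N \<alpha>)
     \<longleftrightarrow> J0 T M A B C lam N w b bs c i (\<alpha>(i := \<beta>)) \<le> J0 T M A B C lam N w b bs c i \<alpha>"
proof -
  define z where "z = abar N w \<alpha> i"
  have agg: "Wagg (step_graphon N w) ((step N \<alpha>)(u := \<beta>)) u = z"
    "Wagg (step_graphon N w) (step N \<alpha>) u = z"
    unfolding z_def i[symmetric] by (rule Wagg_step_graphon[OF N u], simp add: step_def)+
  have agg_N: "abar N w (\<alpha>(i := \<beta>)) i = z"
    unfolding z_def abar_def
    by (intro ext, rule arg_cong[where f="\<lambda>x. _ * x"], rule sum.cong) (auto simp: wii)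
  have z: "square_integrable T M z"
    unfolding z_def abar_def using \<alpha>
    by (intro square_integrable_cmult square_integrable_sum) auto
  have "square_integrable T M (\<alpha> i)"
    using \<alpha> stepidx_in[OF N u] by (simp add: i)
  then have "integrable M (\<lambda>\<omega>. own_payoff T A B lam (\<beta> \<omega>) (z \<omega>) (b i \<omega>))"
    "integrable M (\<lambda>\<omega>. own_payoff T A B lam (\<alpha> i \<omega>) (z \<omega>) (b i \<omega>))"
    using integrable_own_payoff[OF assms(1,2) kernels _ z b] \<beta> by blast+
  moreover have step_u: "step N b u = b i" "step N \<alpha> u = \<alpha> i"
    by (simp_all add: step_def i)
  ultimately show ?thesis
    unfolding JW_def J0_def agg agg_N z_def[symmetric] fun_upd_same step_u payoff_split
    by (intro integral_add_le_iff_shift cg c)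
qed

definition best_response_N ::
  "real \<Rightarrow> 'w measure \<Rightarrow> (real \<Rightarrow> 'w measure) \<Rightarrow> (real \<Rightarrow> real \<Rightarrow> real) \<Rightarrow> (real \<Rightarrow> real \<Rightarrow> real)
   \<Rightarrow> (real \<Rightarrow> real \<Rightarrow> real) \<Rightarrow> real \<Rightarrow> nat \<Rightarrow> (nat \<Rightarrow> nat \<Rightarrow> real) \<Rightarrow> (nat \<Rightarrow> 'w \<Rightarrow> real \<Rightarrow> real)
   \<Rightarrow> ('w \<Rightarrow> real \<Rightarrow> real) \<Rightarrow> (nat \<Rightarrow> 'w \<Rightarrow> real) \<Rightarrow> (nat \<Rightarrow> 'w \<Rightarrow> real \<Rightarrow> real) \<Rightarrow> nat \<Rightarrow> bool" where
  "best_response_N T M F A B C lam N w b bs c \<alpha> i \<longleftrightarrow>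
     (\<forall>\<beta>. admissible T M F \<beta> \<longrightarrow>
        J0 T M A B C lam N w b bs c i (\<alpha>(i := \<beta>)) \<le> J0 T M A B C lam N w b bs c i \<alpha>)"

definition best_response_graphon ::
  "real \<Rightarrow> 'w measure \<Rightarrow> (real \<Rightarrow> 'w measure) \<Rightarrow> (real \<Rightarrow> real \<Rightarrow> real) \<Rightarrow> (real \<Rightarrow> real \<Rightarrow> real)
   \<Rightarrow> (real \<Rightarrow> real \<Rightarrow> real) \<Rightarrow> real \<Rightarrow> (real \<Rightarrow> real \<Rightarrow> real) \<Rightarrow> (real \<Rightarrow> 'w \<Rightarrow> real \<Rightarrow> real)
   \<Rightarrow> ('w \<Rightarrow> real \<Rightarrow> real) \<Rightarrow> (real \<Rightarrow> 'w \<Rightarrow> real) \<Rightarrow> (real \<Rightarrow> 'w \<Rightarrow> real \<Rightarrow> real) \<Rightarrow> real \<Rightarrow> bool" where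
  "best_response_graphon T M F A B C lam W b bs c \<alpha> u \<longleftrightarrow>
     (\<forall>\<beta>. admissible T M F \<beta> \<longrightarrow>
        JW T M A B C lam W b bs c u (\<alpha>(u := \<beta>)) \<le> JW T M A B C lam W b bs c u \<alpha>)"

lemma nash_N_iff_best_responses:
  "nash_N T M F A B C lam N w b bs c \<alpha> \<longleftrightarrow> (\<forall>j\<in>{1..N}. admissible T M F (\<alpha> j)) \<and>
     (\<forall>i\<in>{1..N}. best_response_N T M F A B C lam N w b bs c \<alpha> i)"
  by (simp add: nash_N_def best_response_N_def)

lemma nash_graphon_iff_best_responses:
  "nash_graphon T M F A B C lam W b bs c \<alpha> \<longleftrightarrow> admissibleG T M F \<alpha> \<and>
     (AE u in lborel. u \<in> {0..1} \<longrightarrow> best_response_graphon T M F A B C lam W b bs c \<alpha> u)"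
  by (simp add: nash_graphon_def best_response_graphon_def)

lemma best_response_graphon_step_iff:
  assumes setting: "sigma_finite_measure M" "T \<ge> 0" "sets (F T) \<subseteq> sets M" "space (F T) = space M"
    and kernels: "row_bounded_kernel T A" "row_bounded_kernel T B" "row_bounded_kernel T (kadj B)"
    and N: "N \<ge> 1" and u: "u \<in> {0..1}" and i: "stepidx N u = i" and wii: "w i i = 0"
    and \<alpha>: "\<forall>j\<in>{1..N}. admissible T M F (\<alpha> j)" and b: "progressive T F (b i)" "L2proc T M (b i)"
    and c: "integrable M (c i)" and cg: "integrable M (cg u)"
  shows "best_response_graphon T M F A B C lam (step_graphon N w) (step N b) bs cg (step N \<alpha>) u
     \<longleftrightarrow> best_response_N T M F A B C lam N w b bs c \<alpha> i"
proof -
  note sq_int = square_integrable_if_progressive[of F T M, OF setting(3,4,1,2)]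
  have \<alpha>_sq: "\<forall>j\<in>{1..N}. square_integrable T M (\<alpha> j)"
    using \<alpha> sq_int unfolding admissible_def by blast
  have dev: "JW T M A B C lam (step_graphon N w) (step N b) bs cg u ((step N \<alpha>)(u := \<beta>))
      \<le> JW T M A B C lam (step_graphon N w) (step N b) bs cg u (step N \<alpha>)
    \<longleftrightarrow> J0 T M A B C lam N w b bs c i (\<alpha>(i := \<beta>)) \<le> J0 T M A B C lam N w b bs c i \<alpha>"
    if "admissible T M F \<beta>" for \<beta>
  proof -
    have "square_integrable T M \<beta>"
      using that sq_int unfolding admissible_def by blast
    then show ?thesis
      by (rule deviation_payoff_le_iff[where M=M and T=T and N=N and u=u and i=i and w=w and \<alpha>=\<alpha>
          and b=b and c=c and cg=cg, OF setting(1,2) kernels N u i wii \<alpha>_sq _ sq_int[OF b] c cg])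
  qed
  then show ?thesis
    unfolding best_response_graphon_def best_response_N_def
    by (intro all_cong1 imp_cong[OF refl]) (erule dev)
qed

theorem mainTheorem6:
  fixes T lam :: real and M :: "'w measure" and F :: "real \<Rightarrow> 'w measure"
    and A B C :: "real \<Rightarrow> real \<Rightarrow> real"
    and N :: nat and w :: "nat \<Rightarrow> nat \<Rightarrow> real"
    and b :: "nat \<Rightarrow> 'w \<Rightarrow> real \<Rightarrow> real" and bs :: "'w \<Rightarrow> real \<Rightarrow> real"
    and c :: "nat \<Rightarrow> 'w \<Rightarrow> real" and cg :: "real \<Rightarrow> 'w \<Rightarrow> real"
    and \<alpha> :: "nat \<Rightarrow> 'w \<Rightarrow> real \<Rightarrow> real"
  assumes T_pos: "T > 0"
    and prob: "prob_space M"
    and filt: "filtration (space M) F"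
    and filt_sub: "\<And>t. sets (F t) \<subseteq> sets M"
    and N_pos: "N \<ge> 1"
    and A_volt: "volterra T A" and B_volt: "volterra T B" and C_volt: "volterra T C"
    and lam_pos: "lam > 0"
    and b_adm: "\<forall>i\<in>{1..N}. progressive T F (b i) \<and> L2proc T M (b i)"
    and bs_adm: "progressive T F bs \<and> L2proc T M bs"
    and c_int: "\<forall>i\<in>{1..N}. integrable M (c i) \<and> c i \<in> borel_measurable (F T)"
    and w_range: "\<forall>i\<in>{1..N}. \<forall>j\<in>{1..N}. 0 \<le> w i j \<and> w i j \<le> 1"
    and w_sym: "\<forall>i\<in>{1..N}. \<forall>j\<in>{1..N}. w i j = w j i"
    and w_diag: "\<forall>i\<in>{1..N}. w i i = 0"
    and W_kernel_bound:
      "\<exists>K::real. (\<forall>t\<in>{0..T}. (\<integral>\<^sup>+ s \<in> {0..T}. ennreal ((A t s)\<^sup>2 + (B t s)\<^sup>2) \<partial>lborel) \<le> ennreal K)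
               \<and> (\<forall>s\<in>{0..T}. (\<integral>\<^sup>+ t \<in> {0..T}. ennreal ((A t s)\<^sup>2 + (B t s)\<^sup>2) \<partial>lborel) \<le> ennreal K)"
    and cg_int: "\<forall>u\<in>{0..1}. integrable M (cg u)"
    and A_nonneg: "nonneg_def_kernel T A"
  shows "nash_N T M F A B C lam N w b bs c \<alpha> \<longleftrightarrow>
         nash_graphon T M F A B C lam (step_graphon N w) (step N b) bs cg (step N \<alpha>)"
proof -
  have setting: "sigma_finite_measure M" "T \<ge> 0" "sets (F T) \<subseteq> sets M" "space (F T) = space M"
    using prob_space_imp_sigma_finite[OF prob] T_pos filt_sub filtration.space_F[OF filt] by auto
  have kernels: "row_bounded_kernel T A" "row_bounded_kernel T B" "row_bounded_kernel T (kadj B)"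
    using A_volt B_volt
    by (auto simp: volterra_def intro: row_bounded_kernels_of_uniform_bound[OF _ _ W_kernel_bound])
  have br: "best_response_graphon T M F A B C lam (step_graphon N w) (step N b) bs cg (step N \<alpha>) u
      \<longleftrightarrow> best_response_N T M F A B C lam N w b bs c \<alpha> (stepidx N u)"
    if "\<forall>j\<in>{1..N}. admissible T M F (\<alpha> j)" "u \<in> {0..1}" for u
    using that stepidx_in[OF N_pos that(2)] w_diag b_adm c_int cg_int
    by (intro best_response_graphon_step_iff[where M=M and T=T and F=F and N=N,
          OF setting kernels N_pos]) auto
  have "(\<forall>i\<in>{1..N}. best_response_N T M F A B C lam N w b bs c \<alpha> i) \<longleftrightarrow>
      (AE u in lborel. u \<in> {0..1} \<longrightarrow>
        best_response_graphon T M F A B C lam (step_graphon N w) (step N b) bs cg (step N \<alpha>) u)"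
    if "\<forall>j\<in>{1..N}. admissible T M F (\<alpha> j)"
    unfolding AE_stepidx_iff[OF N_pos, of "best_response_N T M F A B C lam N w b bs c \<alpha>", symmetric]
    by (intro AE_cong imp_cong[OF refl]) (erule br[OF that, THEN sym])
  then show ?thesis
    unfolding nash_N_iff_best_responses nash_graphon_iff_best_responses
      admissibleG_step_iff[where F=F and T=T and M=M, OF N_pos setting(3,4,1,2)]
    by (intro conj_cong[OF refl])
qed

end
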